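(* Let $G$ be a graph with vertices $a,b,c,d$, and let $H$ be any graph. There is perfect pair state transfer between $e_a-e_b$ and $e_c-e_d$ in $G$ if and only if there is perfect pair state transfer between $e_a-e_b$ and $e_c-e_d$ in the join of $G$ and $H$.
   Context: All graphs are finite and simple. The join of graphs $G_1,G_2$ has vertex set $V(G_1)\cup V(G_2)$ (disjoint) and edge set $E(G_1)\cup E(G_2)$ together with all edges having one end in $V(G_1)$ and the other in $V(G_2)$. For a graph $X$ with Laplacian $L=\Delta-A$ ($\Delta$ the degree matrix, $A$ the adjacency matrix), set $U(t)=\exp(itL)$. There is perfect pair state transfer between $e_a-e_b$ and $e_c-e_d$ in $X$ if there exist $t\ge 0$ and $\gamma\in\mathbb{C}$ with $|\gamma|=1$ such that $U(t)(e_a-e_b)=\gamma(e_c-e_d)$, where $e_v$ denotes the standard basis vector of vertex $v$. *)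

theory Defs
  imports Complex_Main
begin

definition simple_graph :: "'a set \<Rightarrow> ('a \<Rightarrow> 'a \<Rightarrow> bool) \<Rightarrow> bool" where
  "simple_graph V E \<longleftrightarrow> finite V \<and> (\<forall>x y. E x y \<longrightarrow> x \<in> V \<and> y \<in> V)
     \<and> (\<forall>x y. E x y \<longrightarrow> E y x) \<and> (\<forall>x. \<not> E x x)"

definition join_V :: "'a set \<Rightarrow> 'b set \<Rightarrow> ('a + 'b) set" where
  "join_V V1 V2 = Inl ` V1 \<union> Inr ` V2"

fun join_E :: "'a set \<Rightarrow> ('a \<Rightarrow> 'a \<Rightarrow> bool) \<Rightarrow> 'b set \<Rightarrow> ('b \<Rightarrow> 'b \<Rightarrow> bool)
     \<Rightarrow> ('a + 'b) \<Rightarrow> ('a + 'b) \<Rightarrow> bool" where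
  "join_E V1 E1 V2 E2 (Inl x) (Inl y) = E1 x y"
| "join_E V1 E1 V2 E2 (Inr x) (Inr y) = E2 x y"
| "join_E V1 E1 V2 E2 (Inl x) (Inr y) = (x \<in> V1 \<and> y \<in> V2)"
| "join_E V1 E1 V2 E2 (Inr x) (Inl y) = (x \<in> V2 \<and> y \<in> V1)"

text \<open>Vectors in C^V are functions 'a => complex (considered on V).
  Degree and Laplacian L = Delta - A acting on vectors.\<close>
definition degree :: "'a set \<Rightarrow> ('a \<Rightarrow> 'a \<Rightarrow> bool) \<Rightarrow> 'a \<Rightarrow> nat" where
  "degree V E x = card {y \<in> V. E x y}"

definition laplacian :: "'a set \<Rightarrow> ('a \<Rightarrow> 'a \<Rightarrow> bool) \<Rightarrow> ('a \<Rightarrow> complex) \<Rightarrow> ('a \<Rightarrow> complex)" where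
  "laplacian V E f = (\<lambda>x. if x \<in> V
      then of_nat (degree V E x) * f x - (\<Sum>y\<in>{y \<in> V. E x y}. f y) else 0)"

text \<open>U(t) = exp(itL), the matrix exponential given by its power series
  sum_k (itL)^k / k!, applied to a vector.\<close>
definition transition :: "'a set \<Rightarrow> ('a \<Rightarrow> 'a \<Rightarrow> bool) \<Rightarrow> real \<Rightarrow> ('a \<Rightarrow> complex) \<Rightarrow> ('a \<Rightarrow> complex)" where
  "transition V E t f = (\<lambda>x. \<Sum>k. ((\<i> * of_real t) ^ k / of_nat (fact k)) * ((laplacian V E ^^ k) f) x)"

definition std_basis :: "'a \<Rightarrow> 'a \<Rightarrow> complex" where
  "std_basis v = (\<lambda>x. if x = v then 1 else 0)"

definition pair_state :: "'a \<Rightarrow> 'a \<Rightarrow> 'a \<Rightarrow> complex" where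
  "pair_state a b = (\<lambda>x. std_basis a x - std_basis b x)"

definition pair_PST :: "'a set \<Rightarrow> ('a \<Rightarrow> 'a \<Rightarrow> bool) \<Rightarrow> 'a \<Rightarrow> 'a \<Rightarrow> 'a \<Rightarrow> 'a \<Rightarrow> bool" where
  "pair_PST V E a b c d \<longleftrightarrow> (\<exists>t::real. t \<ge> 0 \<and> (\<exists>\<gamma>::complex. cmod \<gamma> = 1 \<and>
      (\<forall>x\<in>V. transition V E t (pair_state a b) x = \<gamma> * pair_state c d x)))"

end

theory Submission
  imports Defs
begin

text \<open>Take a vector g on V(G) whose entries sum to zero and extend it by zero to the
  join X of G and H. Every vertex of H is adjacent to all of V(G), so it sees the sum of
  the entries of g, which vanishes; every vertex of G gains |V(H)| neighbours carrying
  zero entries. Hence on such vectors L(X) acts as L(G) + |V(H)| I. Since L(G) keeps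
  vectors balanced, expanding the powers binomially and forming the Cauchy product of
  the series gives U_X(t) g = exp(i t |V(H)|) U_G(t) g. The two walks
  differ only by a global phase of modulus one, so pair state transfer between vertices
  of G happens in G exactly when it happens in X.\<close>

lemma laplacian_outside: "x \<notin> V \<Longrightarrow> laplacian V E f x = 0"
  by (simp add: laplacian_def)

lemma laplacian_scale: "laplacian V E (\<lambda>x. c * f x) = (\<lambda>x. c * laplacian V E f x)"
  by (auto simp: laplacian_def sum_distrib_left algebra_simps)

lemma laplacian_sum: "laplacian V E (\<lambda>x. \<Sum>j\<in>J. f j x) = (\<lambda>x. \<Sum>j\<in>J. laplacian V E (f j) x)"
  unfolding laplacian_def
  by (rule ext) (auto simp: sum_distrib_left sum_subtractf intro: sum.swap[where B=J])

lemma sum_laplacian_eq_0: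
  assumes "simple_graph V E"
  shows "(\<Sum>x\<in>V. laplacian V E f x) = 0"
proof -
  have fin: "finite V" using assms by (simp add: simple_graph_def)
  have sym: "\<And>x y. E x y = E y x" using assms by (auto simp: simple_graph_def)
  have "(\<Sum>x\<in>V. \<Sum>y\<in>{y \<in> V. E x y}. f y) = (\<Sum>x\<in>V. \<Sum>y\<in>V. if E x y then f y else 0)"
    using fin by (simp add: sum.inter_filter)
  also have "\<dots> = (\<Sum>y\<in>V. \<Sum>x\<in>V. if E x y then f y else 0)" by (rule sum.swap)
  also have "\<dots> = (\<Sum>y\<in>V. of_nat (degree V E y) * f y)"
  proof (rule sum.cong[OF refl])
    fix y assume "y \<in> V"
    have "(\<Sum>x\<in>V. if E x y then f y else 0) = (\<Sum>x\<in>{x\<in>V. E y x}. f y)"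
      using fin by (simp add: sum.inter_filter[symmetric] sym)
    then show "(\<Sum>x\<in>V. if E x y then f y else 0) = of_nat (degree V E y) * f y"
      by (simp add: degree_def)
  qed
  finally show ?thesis by (simp add: laplacian_def sum_subtractf)
qed

definition shifted_laplacian ::
    "'a set \<Rightarrow> ('a \<Rightarrow> 'a \<Rightarrow> bool) \<Rightarrow> complex \<Rightarrow> ('a \<Rightarrow> complex) \<Rightarrow> 'a \<Rightarrow> complex" where
  "shifted_laplacian V E m h = (\<lambda>u. laplacian V E h u + m * h u)"

lemma binomial_sum_Suc:
  fixes A :: "nat \<Rightarrow> 'a::comm_semiring_1" and m :: 'a
  shows "(\<Sum>j\<le>k. of_nat (k choose j) * m^(k-j) * A (Suc j))
           + m * (\<Sum>j\<le>k. of_nat (k choose j) * m^(k-j) * A j)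
       = (\<Sum>j\<le>Suc k. of_nat (Suc k choose j) * m^(Suc k-j) * A j)"
proof -
  have rhs: "(\<Sum>j\<le>Suc k. of_nat (Suc k choose j) * m^(Suc k-j) * A j)
     = m^(Suc k) * A 0 + (\<Sum>j\<le>k. of_nat (k choose j) * m^(k-j) * A (Suc j))
        + (\<Sum>j\<le>k. of_nat (k choose Suc j) * m^(k-j) * A (Suc j))"
    by (simp only: sum.atMost_Suc_shift)
      (simp add: sum.distrib[symmetric] algebra_simps del: sum.atMost_Suc)
  have "m * (\<Sum>j\<le>k. of_nat (k choose j) * m^(k-j) * A j)
      = (\<Sum>j\<le>k. of_nat (k choose j) * m^(Suc k-j) * A j)"
    by (auto simp: sum_distrib_left Suc_diff_le mult_ac intro!: sum.cong)
  also have "\<dots> = (\<Sum>j\<le>Suc k. of_nat (k choose j) * m^(Suc k-j) * A j)"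
    by (simp add: binomial_eq_0)
  also have "\<dots> = m^(Suc k) * A 0 + (\<Sum>j\<le>k. of_nat (k choose Suc j) * m^(k-j) * A (Suc j))"
    by (simp only: sum.atMost_Suc_shift) simp
  finally show ?thesis unfolding rhs by (simp add: add_ac)
qed

lemma shifted_laplacian_power:
  "(shifted_laplacian V E m ^^ k) g
     = (\<lambda>u. \<Sum>j\<le>k. of_nat (k choose j) * m^(k-j) * (laplacian V E ^^ j) g u)"
proof (induction k)
  case 0
  then show ?case by simp
next
  case (Suc k)
  show ?case
  proof (rule ext)
    fix u
    have "(shifted_laplacian V E m ^^ Suc k) g u
      = laplacian V E ((shifted_laplacian V E m ^^ k) g) u + m * (shifted_laplacian V E m ^^ k) g u"
      by (simp add: shifted_laplacian_def)
    also have "\<dots> = (\<Sum>j\<le>k. of_nat (k choose j) * m^(k-j) * (laplacian V E ^^ Suc j) g u)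
        + m * (\<Sum>j\<le>k. of_nat (k choose j) * m^(k-j) * (laplacian V E ^^ j) g u)"
      unfolding Suc.IH by (simp add: laplacian_sum laplacian_scale)
    also have "\<dots> = (\<Sum>j\<le>Suc k. of_nat (Suc k choose j) * m^(Suc k-j) * (laplacian V E ^^ j) g u)"
      by (rule binomial_sum_Suc)
    finally show "(shifted_laplacian V E m ^^ Suc k) g u = \<dots>" .
  qed
qed

definition balanced :: "'a set \<Rightarrow> ('a \<Rightarrow> complex) \<Rightarrow> bool" where
  "balanced V g \<longleftrightarrow> (\<forall>u. u \<notin> V \<longrightarrow> g u = 0) \<and> sum g V = 0"

definition extend_Inl :: "('a \<Rightarrow> complex) \<Rightarrow> 'a + 'b \<Rightarrow> complex" where
  "extend_Inl g = (\<lambda>z. case z of Inl u \<Rightarrow> g u | Inr _ \<Rightarrow> 0)"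

lemma balanced_pair_state: "a \<in> V \<Longrightarrow> b \<in> V \<Longrightarrow> finite V \<Longrightarrow> balanced V (pair_state a b)"
  by (auto simp: balanced_def pair_state_def std_basis_def sum_subtractf)

lemma extend_Inl_pair_state: "extend_Inl (pair_state a b) = pair_state (Inl a) (Inl b)"
  by (rule ext, case_tac x) (auto simp: extend_Inl_def pair_state_def std_basis_def)

lemma balanced_shifted_laplacian_power:
  assumes "simple_graph V E" and "balanced V g"
  shows "balanced V ((shifted_laplacian V E m ^^ k) g)"
proof (induction k)
  case 0
  then show ?case using assms(2) by simp
next
  case (Suc k)
  then show ?case
    using sum_laplacian_eq_0[OF assms(1)]
    by (simp add: balanced_def shifted_laplacian_def laplacian_outside sum.distrib
        sum_distrib_left[symmetric])
qed

lemma laplacian_join_extend_Inl: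
  assumes G: "simple_graph VG EG" and H: "simple_graph VH EH" and g: "balanced VG g"
  shows "laplacian (join_V VG VH) (join_E VG EG VH EH) (extend_Inl g :: 'a + 'b \<Rightarrow> complex)
       = extend_Inl (shifted_laplacian VG EG (of_nat (card VH)) g)"
proof (rule ext)
  fix z :: "'a + 'b"
  have finG: "finite VG" and finH: "finite VH" using G H by (auto simp: simple_graph_def)
  have out: "\<And>u. u \<notin> VG \<Longrightarrow> g u = 0" and s0: "sum g VG = 0"
    using g by (auto simp: balanced_def)
  let ?X = "join_V VG VH" and ?EX = "join_E VG EG VH EH"
  show "laplacian ?X ?EX (extend_Inl g) z = extend_Inl (shifted_laplacian VG EG (card VH) g) z"
  proof (cases "z \<in> ?X")
    case False
    then show ?thesis using out
      by (auto simp: laplacian_def extend_Inl_def shifted_laplacian_def join_V_def split: sum.split)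
  next
    case True
    then consider u where "u \<in> VG" "z = Inl u" | w where "w \<in> VH" "z = Inr w"
      by (auto simp: join_V_def)
    then show ?thesis
    proof cases
      case (1 u)
      have nbrs: "{y \<in> ?X. ?EX (Inl u) y} = Inl ` {y\<in>VG. EG u y} \<union> Inr ` VH"
        using 1 by (auto simp: join_V_def elim!: join_E.elims)
      have "degree ?X ?EX (Inl u) = degree VG EG u + card VH"
        unfolding degree_def nbrs using finG finH
        by (subst card_Un_disjoint) (auto simp: card_image)
      moreover have "(\<Sum>y\<in>{y \<in> ?X. ?EX (Inl u) y}. extend_Inl g y) = sum g {y\<in>VG. EG u y}"
        unfolding nbrs using finG finH
        by (subst sum.union_disjoint) (auto simp: sum.reindex extend_Inl_def)
      ultimately show ?thesis using 1 True
        by (simp add: laplacian_def del: join_E.simps)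
          (simp add: extend_Inl_def shifted_laplacian_def laplacian_def algebra_simps)
    next
      case (2 w)
      have nbrs: "{y \<in> ?X. ?EX (Inr w) y} = Inr ` {y\<in>VH. EH w y} \<union> Inl ` VG"
        using 2 by (auto simp: join_V_def elim!: join_E.elims)
      have "(\<Sum>y\<in>{y \<in> ?X. ?EX (Inr w) y}. extend_Inl g y) = sum g VG"
        unfolding nbrs using finG finH
        by (subst sum.union_disjoint) (auto simp: sum.reindex extend_Inl_def)
      then show ?thesis using 2 True s0
        by (simp add: laplacian_def del: join_E.simps) (simp add: extend_Inl_def)
    qed
  qed
qed

lemma laplacian_join_power_extend_Inl:
  assumes G: "simple_graph VG EG" and H: "simple_graph VH EH" and g: "balanced VG g"
  shows "(laplacian (join_V VG VH) (join_E VG EG VH EH) ^^ k) (extend_Inl g :: 'a + 'b \<Rightarrow> complex)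
       = extend_Inl ((shifted_laplacian VG EG (of_nat (card VH)) ^^ k) g)"
  by (induction k)
    (simp_all add: laplacian_join_extend_Inl[OF G H balanced_shifted_laplacian_power[OF G g]])

lemma sum_norm_laplacian_le:
  assumes G: "simple_graph V E"
  shows "(\<Sum>v\<in>V. norm (laplacian V E h v))
           \<le> real (card V) * (real (card V) + 1) * (\<Sum>x\<in>V. norm (h x))"
proof -
  have fin: "finite V" using G by (simp add: simple_graph_def)
  let ?S = "\<Sum>x\<in>V. norm (h x)"
  have "norm (laplacian V E h v) \<le> (real (card V) + 1) * ?S" if v: "v \<in> V" for v
  proof -
    have "degree V E v \<le> card V" unfolding degree_def using fin by (intro card_mono) auto
    moreover have "norm (h v) \<le> ?S" using fin v by (intro member_le_sum) auto
    ultimately have "norm (of_nat (degree V E v) * h v) \<le> real (card V) * ?S"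
      by (simp add: norm_mult mult_mono)
    moreover have "norm (\<Sum>y\<in>{y \<in> V. E v y}. h y) \<le> ?S"
      using fin by (intro order.trans[OF norm_sum] sum_mono2) auto
    moreover have "norm (laplacian V E h v)
        \<le> norm (of_nat (degree V E v) * h v) + norm (\<Sum>y\<in>{y \<in> V. E v y}. h y)"
      using v by (simp add: laplacian_def norm_triangle_ineq4)
    ultimately show ?thesis by (simp add: algebra_simps)
  qed
  then have "(\<Sum>v\<in>V. norm (laplacian V E h v)) \<le> (\<Sum>v\<in>V. (real (card V) + 1) * ?S)"
    by (intro sum_mono) auto
  then show ?thesis by simp
qed

lemma norm_laplacian_power_le:
  assumes G: "simple_graph V E" and v: "v \<in> V"
  shows "norm ((laplacian V E ^^ j) g v)
           \<le> (real (card V) * (real (card V) + 1)) ^ j * (\<Sum>x\<in>V. norm (g x))"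
proof -
  let ?K = "real (card V) * (real (card V) + 1)"
  have fin: "finite V" using G by (simp add: simple_graph_def)
  have sum_le: "(\<Sum>x\<in>V. norm ((laplacian V E ^^ j) g x)) \<le> ?K ^ j * (\<Sum>x\<in>V. norm (g x))"
  proof (induction j)
    case 0
    then show ?case by simp
  next
    case (Suc j)
    have "(\<Sum>x\<in>V. norm ((laplacian V E ^^ Suc j) g x))
        \<le> ?K * (\<Sum>x\<in>V. norm ((laplacian V E ^^ j) g x))"
      using sum_norm_laplacian_le[OF G] by simp
    also have "\<dots> \<le> ?K * (?K ^ j * (\<Sum>x\<in>V. norm (g x)))"
      using Suc by (intro mult_left_mono) auto
    finally show ?case by (simp add: algebra_simps)
  qed
  have "norm ((laplacian V E ^^ j) g v) \<le> (\<Sum>x\<in>V. norm ((laplacian V E ^^ j) g x))"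
    using fin v by (intro member_le_sum) auto
  with sum_le show ?thesis by linarith
qed

lemma summable_norm_transition_terms:
  assumes G: "simple_graph V E" and v: "v \<in> V"
  shows "summable (\<lambda>j. norm ((\<i> * of_real t) ^ j / of_nat (fact j) * (laplacian V E ^^ j) g v))"
proof -
  let ?K = "real (card V) * (real (card V) + 1)"
  let ?S = "\<Sum>x\<in>V. norm (g x)"
  have bound: "norm ((\<i> * of_real t) ^ j / of_nat (fact j) * (laplacian V E ^^ j) g v)
      \<le> ?S * ((\<bar>t\<bar> * ?K) ^ j /\<^sub>R fact j)" for j
  proof -
    have "norm ((\<i> * of_real t) ^ j / of_nat (fact j) * (laplacian V E ^^ j) g v)
        = \<bar>t\<bar> ^ j / fact j * norm ((laplacian V E ^^ j) g v)"
      by (simp add: norm_mult norm_divide norm_power)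
    also have "\<dots> \<le> \<bar>t\<bar> ^ j / fact j * (?K ^ j * ?S)"
      using norm_laplacian_power_le[OF G v] by (intro mult_left_mono) auto
    also have "\<dots> = ?S * ((\<bar>t\<bar> * ?K) ^ j /\<^sub>R fact j)"
      by (simp add: power_mult_distrib divide_inverse)
    finally show ?thesis .
  qed
  have "summable (\<lambda>j. ?S * ((\<bar>t\<bar> * ?K) ^ j /\<^sub>R fact j))"
    by (intro summable_mult summable_exp_generic)
  then show ?thesis
    by (rule summable_comparison_test') (simp only: real_norm_def abs_norm_cancel bound)
qed

lemma binomial_term_split:
  fixes x m A :: complex
  assumes "j \<le> k"
  shows "x ^ k / of_nat (fact k) * (of_nat (k choose j) * m^(k-j) * A)
       = (x ^ j / of_nat (fact j) * A) * ((x * m) ^ (k - j) /\<^sub>R fact (k - j))"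
proof -
  have "x ^ k = x ^ j * x ^ (k - j)"
    using assms by (simp flip: power_add)
  moreover have "(of_nat (k choose j) :: complex) = fact k / (fact j * fact (k - j))"
    using binomial_fact[OF assms] by simp
  ultimately show ?thesis
    by (simp add: power_mult_distrib scaleR_conv_of_real field_simps)
qed

lemma transition_shifted_laplacian:
  assumes G: "simple_graph V E" and u: "u \<in> V"
  shows "(\<Sum>k. (\<i> * of_real t) ^ k / of_nat (fact k) * (shifted_laplacian V E m ^^ k) g u)
       = exp (\<i> * of_real t * m) * transition V E t g u"
proof -
  let ?x = "\<i> * of_real t :: complex"
  define a where "a j = ?x ^ j / of_nat (fact j) * (laplacian V E ^^ j) g u" for j
  define b where "b n = (?x * m) ^ n /\<^sub>R fact n" for n
  have "(\<Sum>k. ?x ^ k / of_nat (fact k) * (shifted_laplacian V E m ^^ k) g u)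
      = (\<Sum>k. \<Sum>j\<le>k. a j * b (k - j))"
    unfolding shifted_laplacian_power sum_distrib_left a_def b_def
    by (intro suminf_cong sum.cong refl binomial_term_split) simp
  also have "\<dots> = (\<Sum>k. a k) * (\<Sum>k. b k)"
    by (rule Cauchy_product[symmetric])
      (use summable_norm_transition_terms[OF G u] summable_norm_exp in \<open>simp_all add: a_def b_def\<close>)
  also have "(\<Sum>k. b k) = exp (?x * m)"
    unfolding b_def by (rule sums_unique[OF exp_converges, symmetric])
  finally show ?thesis by (simp add: transition_def a_def mult.commute)
qed

lemma transition_outside:
  assumes "u \<notin> V" and "g u = 0"
  shows "transition V E t g u = 0"
proof -
  have "(laplacian V E ^^ k) g u = 0" for k
    using assms by (cases k) (simp_all add: laplacian_outside)
  then show ?thesis by (simp add: transition_def)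
qed

lemma transition_join_extend_Inl:
  assumes G: "simple_graph VG EG" and H: "simple_graph VH EH" and g: "balanced VG g"
  shows "transition (join_V VG VH) (join_E VG EG VH EH) t (extend_Inl g :: 'a + 'b \<Rightarrow> complex)
       = extend_Inl (\<lambda>u. cis (t * card VH) * transition VG EG t g u)"
proof (rule ext)
  fix z :: "'a + 'b"
  show "transition (join_V VG VH) (join_E VG EG VH EH) t (extend_Inl g) z
       = extend_Inl (\<lambda>u. cis (t * card VH) * transition VG EG t g u) z"
  proof (cases z)
    case (Inl u)
    show ?thesis
    proof (cases "u \<in> VG")
      case True
      then show ?thesis using Inl transition_shifted_laplacian[OF G True, of t "of_nat (card VH)" g]
        unfolding transition_def laplacian_join_power_extend_Inl[OF G H g]
        by (simp add: extend_Inl_def cis_conv_exp mult.assoc)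
    next
      case False
      have "(shifted_laplacian VG EG (of_nat (card VH)) ^^ k) g u = 0" for k
        using balanced_shifted_laplacian_power[OF G g] False by (simp add: balanced_def)
      moreover have "transition VG EG t g u = 0"
        using g False by (intro transition_outside) (auto simp: balanced_def)
      ultimately show ?thesis using Inl
        unfolding transition_def laplacian_join_power_extend_Inl[OF G H g]
        by (simp add: extend_Inl_def)
    qed
  next
    case (Inr w)
    then show ?thesis
      unfolding transition_def laplacian_join_power_extend_Inl[OF G H g]
      by (simp add: extend_Inl_def)
  qed
qed

theorem mainTheorem2:
  fixes VG :: "'a set" and EG :: "'a \<Rightarrow> 'a \<Rightarrow> bool"
    and VH :: "'b set" and EH :: "'b \<Rightarrow> 'b \<Rightarrow> bool"
    and a b c d :: 'a
  assumes "simple_graph VG EG" and "simple_graph VH EH"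
    and "a \<in> VG" "b \<in> VG" "c \<in> VG" "d \<in> VG"
  shows "pair_PST VG EG a b c d \<longleftrightarrow>
         pair_PST (join_V VG VH) (join_E VG EG VH EH) (Inl a) (Inl b) (Inl c) (Inl d)"
proof -
  note G = assms(1) and H = assms(2)
  let ?\<omega> = "\<lambda>t::real. cis (t * card VH)"
  have walk: "transition (join_V VG VH) (join_E VG EG VH EH) t (pair_state (Inl a) (Inl b))
      = extend_Inl (\<lambda>u. ?\<omega> t * transition VG EG t (pair_state a b) u)" for t
    using transition_join_extend_Inl[OF G H balanced_pair_state] assms
    by (simp add: simple_graph_def extend_Inl_pair_state)
  have target: "pair_state (Inl c) (Inl d) = (extend_Inl (pair_state c d) :: 'a + 'b \<Rightarrow> complex)"
    by (simp add: extend_Inl_pair_state)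
  have transfer_iff:
    "(\<forall>x\<in>join_V VG VH. transition (join_V VG VH) (join_E VG EG VH EH) t (pair_state (Inl a) (Inl b)) x
        = \<gamma> * pair_state (Inl c) (Inl d) x)
     \<longleftrightarrow> (\<forall>u\<in>VG. transition VG EG t (pair_state a b) u = \<gamma> / ?\<omega> t * pair_state c d u)" for t \<gamma>
    unfolding walk target by (simp add: join_V_def extend_Inl_def ball_Un Ball_image_comp field_simps)
  show ?thesis
    unfolding pair_PST_def transfer_iff
  proof (intro iffI; elim exE conjE)
    fix t \<gamma> assume "t \<ge> 0" "cmod \<gamma> = 1"
      "\<forall>u\<in>VG. transition VG EG t (pair_state a b) u = \<gamma> * pair_state c d u"
    then show "\<exists>t\<ge>0. \<exists>\<gamma>. cmod \<gamma> = 1 \<and>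
        (\<forall>u\<in>VG. transition VG EG t (pair_state a b) u = \<gamma> / ?\<omega> t * pair_state c d u)"
      by (intro exI[of _ t] conjI exI[of _ "\<gamma> * ?\<omega> t"]) (simp_all add: norm_mult)
  next
    fix t \<gamma> assume "t \<ge> 0" "cmod \<gamma> = 1"
      "\<forall>u\<in>VG. transition VG EG t (pair_state a b) u = \<gamma> / ?\<omega> t * pair_state c d u"
    then show "\<exists>t\<ge>0. \<exists>\<gamma>. cmod \<gamma> = 1 \<and>
        (\<forall>u\<in>VG. transition VG EG t (pair_state a b) u = \<gamma> * pair_state c d u)"
      by (intro exI[of _ t] conjI exI[of _ "\<gamma> / ?\<omega> t"]) (simp_all add: norm_divide)
  qed
qed

end
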